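(* Let $(N,g)$ be a simply connected five-dimensional two-step nilpotent Lie group with a left-invariant Riemannian metric, with Lie algebra $\mathfrak{n}$, Levi-Civita connection $\nabla$, and let $\mathfrak{h}$ denote the center of $\mathfrak{n}$. Then every left-invariant projective vector field $X\in\mathfrak{n}$ is affine, and a left-invariant vector field $X\in\mathfrak{n}$ is affine if and only if $X\in\mathfrak{h}$.
   Context: A Lie algebra $\mathfrak{n}$ is two-step nilpotent if $[\mathfrak{n},\mathfrak{n}]\neq 0$ and $[\mathfrak{n},[\mathfrak{n},\mathfrak{n}]]=0$. Left-invariant vector fields are identified with elements of $\mathfrak{n}=T_eN$, and $g$ with an inner product $\langle\cdot,\cdot\rangle$ on $\mathfrak{n}$. Up to isometry, such $(\mathfrak{n},\langle\cdot,\cdot\rangle)$ admits an orthonormal basis $e_1,\dots,e_5$ with one of the following bracket structures (all brackets not listed being zero): (Case 1, center of dimension 1) $[e_1,e_2]=\lambda e_5$, $[e_3,e_4]=\mu e_5$ with $\lambda\ge\mu>0$; (Case 2, center of dimension 2) $[e_1,e_2]=\lambda e_4$, $[e_1,e_3]=\mu e_5$ with $\lambda\ge\mu>0$; (Case 3, center of dimension 3) $[e_1,e_2]=\lambda e_3$ with $\lambda>0$. A vector field $X$ is projective if there is a 1-form $\alpha$ with $(\mathcal{L}_X\nabla)(U,V)=\alpha(U)V+\alpha(V)U$ for all vector fields $U,V$, where $(\mathcal{L}_X\nabla)(U,V)=[X,\nabla_UV]-\nabla_{[X,U]}V-\nabla_U[X,V]$; $X$ is affine if $\mathcal{L}_X\nabla=0$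 (equivalently, projective with $\alpha=0$). *)

theory Defs
  imports "HOL-Analysis.Analysis"
begin

text \<open>A five-dimensional metric Lie algebra: the underlying space is real^5 with the standard
inner product (every inner product space of dimension 5 is isometric to it), and the bracket
is an arbitrary bilinear, antisymmetric map satisfying the Jacobi identity.\<close>

type_synonym vec5 = "real^5"

definition lie_bracket :: "(vec5 \<Rightarrow> vec5 \<Rightarrow> vec5) \<Rightarrow> bool" where
  "lie_bracket br \<longleftrightarrow> bilinear br \<and> (\<forall>x y. br x y = - br y x) \<and>
     (\<forall>x y z. br x (br y z) + br y (br z x) + br z (br x y) = 0)"

definition two_step_nilpotent :: "(vec5 \<Rightarrow> vec5 \<Rightarrow> vec5) \<Rightarrow> bool" where
  "two_step_nilpotent br \<longleftrightarrow> (\<exists>x y. br x y \<noteq> 0) \<and> (\<forall>x y z. br x (br y z) = 0)"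

definition center :: "(vec5 \<Rightarrow> vec5 \<Rightarrow> vec5) \<Rightarrow> vec5 set" where
  "center br = {Z. \<forall>Y. br Z Y = 0}"

text \<open>Levi-Civita connection on left-invariant vector fields, determined by the Koszul formula
  2 <nabla_U V, W> = <[U,V],W> - <[V,W],U> + <[W,U],V>.\<close>
definition lc_nabla :: "(vec5 \<Rightarrow> vec5 \<Rightarrow> vec5) \<Rightarrow> vec5 \<Rightarrow> vec5 \<Rightarrow> vec5" where
  "lc_nabla br U V = (THE w. \<forall>W. 2 * (w \<bullet> W) = br U V \<bullet> W - br V W \<bullet> U + br W U \<bullet> V)"

definition lie_deriv_nabla :: "(vec5 \<Rightarrow> vec5 \<Rightarrow> vec5) \<Rightarrow> vec5 \<Rightarrow> vec5 \<Rightarrow> vec5 \<Rightarrow> vec5" where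
  "lie_deriv_nabla br X U V =
     br X (lc_nabla br U V) - lc_nabla br (br X U) V - lc_nabla br U (br X V)"

definition projective_field :: "(vec5 \<Rightarrow> vec5 \<Rightarrow> vec5) \<Rightarrow> vec5 \<Rightarrow> bool" where
  "projective_field br X \<longleftrightarrow> (\<exists>\<alpha>::vec5 \<Rightarrow> real. linear \<alpha> \<and>
     (\<forall>U V. lie_deriv_nabla br X U V = \<alpha> U *\<^sub>R V + \<alpha> V *\<^sub>R U))"

definition affine_field :: "(vec5 \<Rightarrow> vec5 \<Rightarrow> vec5) \<Rightarrow> vec5 \<Rightarrow> bool" where
  "affine_field br X \<longleftrightarrow> (\<forall>U V. lie_deriv_nabla br X U V = 0)"

end

theory Submission
  imports Defs
begin

text \<open>Let ad*_U be the adjoint of ad_U = [U,-]. The Koszul formula gives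
  nabla_U V = 1/2 ([U,V] - ad*_U V - ad*_V U); since ad*_Z = 0 for central Z, the Lie derivative
  splits as (L_X nabla)(U,V) = [X, -1/2 (ad*_U V + ad*_V U)] + 1/2 (ad*_V [X,U] + ad*_U [X,V]),
  the first summand lying in [n,n] and the second orthogonal to it. For an affine field the
  second summand vanishes, which for U = X gives |[X,V]|^2 = 0. For a projective field,
  (L_X nabla)(U,U) = 2 alpha(U) U is orthogonal to the second summand, so that summand vanishes;
  then alpha(U) U lies in [n,n], hence is central, which kills the first summand as well and
  forces alpha(U) = 0.\<close>

lemma zero_if_inner_zero:
  fixes a :: "'a::real_inner"
  assumes "\<And>w. a \<bullet> w = 0"
  shows "a = 0"
  using assms inner_eq_zero_iff by blast

locale two_step_metric_lie =
  fixes br :: "vec5 \<Rightarrow> vec5 \<Rightarrow> vec5"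
  assumes linear_right: "\<And>U. linear (br U)"
    and linear_left: "\<And>V. linear (\<lambda>U. br U V)"
    and antisym: "\<And>x y. br x y = - br y x"
    and nilpotent: "\<And>x y z. br x (br y z) = 0"
begin

lemma bracket_zero_left [simp]: "br 0 V = 0"
  using linear_0[OF linear_left] .

lemma bracket_zero_right [simp]: "br U 0 = 0"
  using linear_0[OF linear_right] .

lemma bracket_self [simp]: "br x x = 0"
proof -
  have "br x x + br x x = 0"
    using antisym[of x x] by (metis add.right_inverse)
  then show ?thesis
    by (metis scaleR_2 scaleR_eq_0_iff zero_neq_numeral)
qed

lemma bracket_central [simp]: "br (br x y) z = 0"
  using antisym nilpotent by metis

lemma inner_adjoint_bracket: "adjoint (br U) V \<bullet> W = V \<bullet> br U W"
  using adjoint_clauses(2)[OF linear_right] .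

lemma inner_adjoint_bracket': "W \<bullet> adjoint (br U) V = V \<bullet> br U W"
  using inner_adjoint_bracket by (simp add: inner_commute)

lemma adjoint_bracket_zero_right [simp]: "adjoint (br U) 0 = 0"
  by (rule zero_if_inner_zero) (simp add: inner_adjoint_bracket)

lemma adjoint_bracket_central [simp]: "adjoint (br (br x y)) V = 0"
  by (rule zero_if_inner_zero) (simp add: inner_adjoint_bracket)

lemma adjoint_bracket_of_central:
  assumes "\<And>Y. br U Y = 0" shows "adjoint (br U) V = 0"
  by (rule zero_if_inner_zero) (simp add: inner_adjoint_bracket assms)

lemma bracket_orthogonal_adjoint [simp]: "br x y \<bullet> adjoint (br U) V = 0"
  by (simp add: inner_adjoint_bracket' nilpotent)

lemma lc_nabla_eq:
  "lc_nabla br U V = (1/2) *\<^sub>R (br U V - adjoint (br U) V - adjoint (br V) U)"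
proof -
  let ?w = "(1/2) *\<^sub>R (br U V - adjoint (br U) V - adjoint (br V) U)"
  have koszul: "2 * (?w \<bullet> W) = br U V \<bullet> W - br V W \<bullet> U + br W U \<bullet> V" for W
    by (simp add: antisym[of W U] inner_adjoint_bracket inner_adjoint_bracket' algebra_simps
        inner_commute[of "br U W"] inner_commute[of "br V W"])
  show ?thesis unfolding lc_nabla_def
  proof (rule the_equality)
    fix w assume "\<forall>W. 2 * (w \<bullet> W) = br U V \<bullet> W - br V W \<bullet> U + br W U \<bullet> V"
    with koszul have "w \<bullet> W = ?w \<bullet> W" for W
      by (metis mult_cancel_left zero_neq_numeral)
    then have "(w - ?w) \<bullet> W = 0" for W
      by (simp only: inner_diff_left)
    then show "w = ?w" using zero_if_inner_zero[of "w - ?w"] by simp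
  qed (use koszul in blast)
qed

lemma lie_deriv_nabla_split:
  "lie_deriv_nabla br X U V =
     br X ((- 1/2) *\<^sub>R (adjoint (br U) V + adjoint (br V) U))
     + (1/2) *\<^sub>R (adjoint (br V) (br X U) + adjoint (br U) (br X V))"
proof -
  have "br X (lc_nabla br U V) = br X ((- 1/2) *\<^sub>R (adjoint (br U) V + adjoint (br V) U))"
    using linear_right[of X]
    by (simp add: lc_nabla_eq linear_scale linear_diff linear_add linear_neg nilpotent algebra_simps)
  moreover have "lc_nabla br (br X U) V = (- 1/2) *\<^sub>R adjoint (br V) (br X U)"
    by (simp add: lc_nabla_eq)
  moreover have "lc_nabla br U (br X V) = (- 1/2) *\<^sub>R adjoint (br U) (br X V)"
    by (simp add: lc_nabla_eq antisym[of U "br X V"])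
  ultimately show ?thesis unfolding lie_deriv_nabla_def by (simp add: algebra_simps)
qed

lemma inner_lie_deriv_nabla_adjoint_part:
  fixes X U V :: vec5
  defines "b \<equiv> adjoint (br V) (br X U) + adjoint (br U) (br X V)"
  shows "lie_deriv_nabla br X U V \<bullet> b = (1/2) * (b \<bullet> b)"
proof -
  have "br X ((- 1/2) *\<^sub>R (adjoint (br U) V + adjoint (br V) U)) \<bullet> b = 0"
    by (simp add: b_def inner_add_right)
  then show ?thesis
    unfolding lie_deriv_nabla_split b_def by (simp only: inner_add_left inner_scaleR_left)
qed

lemma affine_field_iff_center: "affine_field br X \<longleftrightarrow> X \<in> center br"
proof
  assume "X \<in> center br"
  then have "br X Y = 0" for Y by (simp add: center_def)
  then show "affine_field br X"
    by (simp add: affine_field_def lie_deriv_nabla_def lc_nabla_eq adjoint_bracket_of_central)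
next
  assume affine: "affine_field br X"
  have "br X Y = 0" for Y
  proof -
    have "adjoint (br X) (br X Y) = 0"
      using inner_lie_deriv_nabla_adjoint_part[of X X Y] affine by (simp add: affine_field_def)
    then have "br X Y \<bullet> br X Y = 0"
      using inner_adjoint_bracket[of X "br X Y" Y] by simp
    then show ?thesis by simp
  qed
  then show "X \<in> center br" by (simp add: center_def)
qed

lemma projective_field_imp_affine_field:
  assumes "projective_field br X" shows "affine_field br X"
proof -
  obtain \<alpha> where "linear \<alpha>" and \<alpha>: "\<And>U V. lie_deriv_nabla br X U V = \<alpha> U *\<^sub>R V + \<alpha> V *\<^sub>R U"
    using assms unfolding projective_field_def by blast
  have "\<alpha> U = 0" for U
  proof (rule ccontr)
    assume nonzero: "\<alpha> U \<noteq> 0"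
    let ?s = "(- 1/2) *\<^sub>R (adjoint (br U) U + adjoint (br U) U)"
    let ?b = "adjoint (br U) (br X U) + adjoint (br U) (br X U)"
    have diag: "lie_deriv_nabla br X U U = (2 * \<alpha> U) *\<^sub>R U"
      using \<alpha>[of U U] by (simp add: scaleR_2 flip: scaleR_scaleR)
    have "U \<bullet> ?b = 0"
      by (simp only: inner_add_right inner_adjoint_bracket' bracket_self inner_zero_right add_0)
    then have "?b \<bullet> ?b = 0"
      using inner_lie_deriv_nabla_adjoint_part[of X U U] by (simp only: diag inner_scaleR_left)
    then have "?b = 0"
      by (simp only: inner_eq_zero_iff)
    then have "br X ?s = (2 * \<alpha> U) *\<^sub>R U"
      using lie_deriv_nabla_split[of X U U] diag by simp
    then have U_bracket: "U = (1 / (2 * \<alpha> U)) *\<^sub>R br X ?s"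
      using nonzero by simp
    have "br U Y = 0" for Y
      by (subst U_bracket) (simp add: linear_scale[OF linear_left])
    then have "adjoint (br U) U = 0"
      by (rule adjoint_bracket_of_central)
    then have "U = 0"
      using U_bracket by simp
    with \<open>linear \<alpha>\<close> nonzero show False
      by (simp add: linear_0)
  qed
  then show ?thesis
    by (simp add: affine_field_def \<alpha>)
qed

end

lemma two_step_metric_lie_if:
  assumes "lie_bracket br" and "two_step_nilpotent br"
  shows "two_step_metric_lie br"
  using assms unfolding lie_bracket_def two_step_nilpotent_def bilinear_def
  by (intro two_step_metric_lie.intro) blast+

theorem mainTheorem2:
  fixes br :: "vec5 \<Rightarrow> vec5 \<Rightarrow> vec5"
  assumes "lie_bracket br" and "two_step_nilpotent br"
  shows "(\<forall>X. projective_field br X \<longrightarrow> affine_field br X) \<and>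
         (\<forall>X. affine_field br X \<longleftrightarrow> X \<in> center br)"
proof -
  interpret two_step_metric_lie br
    using two_step_metric_lie_if assms .
  show ?thesis
    using projective_field_imp_affine_field affine_field_iff_center by blast
qed

end
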